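(* Every separable connected almost totally disconnected compact space is metrizable.
   Context: For a set $\Gamma$, $\Sigma_0^1[0,1]^\Gamma$ is the subspace of $[0,1]^\Gamma$ (product topology) consisting of those $x$ with $x_\gamma\in\{0,1\}$ for all but countably many $\gamma$. A compact space is almost totally disconnected if it is homeomorphic to a subspace of $\Sigma_0^1[0,1]^\Gamma$ for some set $\Gamma$. *)

theory Defs
  imports "HOL-Analysis.Analysis"
begin

definition unit_cube_top :: "'g set \<Rightarrow> ('g \<Rightarrow> real) topology" where
  "unit_cube_top \<Gamma> = product_topology (\<lambda>_. top_of_set {0..1::real}) \<Gamma>"

definition Sigma01 :: "'g set \<Rightarrow> ('g \<Rightarrow> real) set" where
  "Sigma01 \<Gamma> = {x \<in> topspace (unit_cube_top \<Gamma>). countable {\<gamma> \<in> \<Gamma>. x \<gamma> \<notin> {0, 1}}}"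

text \<open>X is a compact space homeomorphic to a subspace of Sigma_0^1[0,1]^Gamma (for the given index set Gamma).
  Almost total disconnectedness is the existence of some such Gamma.\<close>
definition almost_totally_disconnected_via :: "'g set \<Rightarrow> 'a topology \<Rightarrow> bool" where
  "almost_totally_disconnected_via \<Gamma> X \<longleftrightarrow>
     compact_space X \<and>
     (\<exists>Y. Y \<subseteq> Sigma01 \<Gamma> \<and> X homeomorphic_space subtopology (unit_cube_top \<Gamma>) Y)"

end

theory Submission
  imports Defs
begin

(* Replace X by a homeomorphic copy Y \<subseteq> Sigma01 \<Gamma>; separability,
   connectedness and metrizability are topological invariants.  Let D be a countable
   dense subset of Y and C the countable set of coordinates at which some point of D
   takes a value outside {0,1}.  For \<gamma> \<notin> C the projection x \<mapsto> x \<gamma> is continuous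
   and maps the dense set D into the closed set {0,1}, hence maps all of Y into {0,1};
   as Y is connected, it is constant on Y.  Thus Y lies in a box \<Pi> S \<gamma> whose factors
   are singletons except for the countably many \<gamma> \<in> C, and such a box is a metrizable
   product (a product of metrizable spaces with countably many nontrivial factors). *)

lemma continuous_map_dense_image_in_closed:
  assumes f: "continuous_map X Z f"
    and dense: "X closure_of D = topspace X"
    and K: "closedin Z K"
    and fD: "f ` D \<subseteq> K"
  shows "f ` topspace X \<subseteq> K"
proof -
  have "f ` topspace X \<subseteq> Z closure_of (f ` D)"
    using continuous_map_image_closure_subset[OF f, of D] dense by simp
  also have "\<dots> \<subseteq> Z closure_of K"
    by (rule closure_of_mono[OF fD])
  also have "\<dots> = K"
    using K by (simp add: closure_of_eq)
  finally show ?thesis .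
qed

text \<open>On a connected space, a continuous real function taking at most two values
  is constant, since its image is an interval.\<close>
lemma connected_space_two_valued_map_constant:
  fixes f :: "'a \<Rightarrow> real"
  assumes X: "connected_space X"
    and f: "continuous_map X euclideanreal f"
    and two: "f ` topspace X \<subseteq> {a, b}"
    and x: "x \<in> topspace X" and y: "y \<in> topspace X"
  shows "f x = f y"
proof (rule ccontr)
  assume ne: "f x \<noteq> f y"
  have "connectedin euclideanreal (f ` topspace X)"
    using connectedin_continuous_map_image[OF f] X connectedin_topspace by blast
  then have conn: "connected (f ` topspace X)"
    by (simp add: connectedin_iff_connected)
  have mid: "(f x + f y) / 2 \<in> f ` topspace X"
  proof (cases "f x \<le> f y")
    case True
    then show ?thesis
      using connectedD_interval[OF conn, of "f x" "f y"] x y by auto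
  next
    case False
    then show ?thesis
      using connectedD_interval[OF conn, of "f y" "f x"] x y by auto
  qed
  have "f x \<in> {a, b}" "f y \<in> {a, b}"
    using two x y by auto
  then show False
    using mid two ne by auto
qed

lemma metrizable_subspace_of_countably_nontrivial_box:
  assumes Y: "Y \<subseteq> (\<Pi>\<^sub>E i\<in>I. S i)"
    and C: "countable {i \<in> I. \<not> (\<exists>a. S i \<subseteq> {a})}"
    and met: "\<And>i. i \<in> I \<Longrightarrow> metrizable_space (X i)"
  shows "metrizable_space (subtopology (product_topology X I) Y)"
proof -
  let ?B = "product_topology (\<lambda>i. subtopology (X i) (S i)) I"
  have "{i \<in> I. \<not> (\<exists>a. topspace (subtopology (X i) (S i)) \<subseteq> {a})}
          \<subseteq> {i \<in> I. \<not> (\<exists>a. S i \<subseteq> {a})}"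
    by auto
  then have "countable {i \<in> I. \<not> (\<exists>a. topspace (subtopology (X i) (S i)) \<subseteq> {a})}"
    using C countable_subset by blast
  then have "metrizable_space ?B"
    unfolding metrizable_space_product_topology
    by (simp add: met metrizable_space_subtopology)
  moreover have "subtopology ?B Y = subtopology (product_topology X I) Y"
    using Y by (simp only: subtopology_subtopology Int_absorb1 flip: subtopology_product_topology)
  ultimately show ?thesis
    by (metis metrizable_space_subtopology)
qed

lemma continuous_map_cube_coordinate:
  assumes "\<gamma> \<in> \<Gamma>"
  shows "continuous_map (subtopology (unit_cube_top \<Gamma>) Y) euclideanreal (\<lambda>x. x \<gamma>)"
proof -
  have "continuous_map (unit_cube_top \<Gamma>) (top_of_set {0..1::real}) (\<lambda>x. x \<gamma>)"
    unfolding unit_cube_top_def using assms by (rule continuous_map_product_projection)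
  then show ?thesis
    by (simp add: continuous_map_from_subtopology continuous_map_into_fulltopology)
qed

lemma separable_connected_Sigma01_agree_off_countable:
  fixes Y :: "('g \<Rightarrow> real) set"
  assumes Y: "Y \<subseteq> Sigma01 \<Gamma>"
    and sep: "separable_space (subtopology (unit_cube_top \<Gamma>) Y)"
    and con: "connected_space (subtopology (unit_cube_top \<Gamma>) Y)"
  obtains C where "countable C"
    and "\<And>\<gamma> x y. \<lbrakk>\<gamma> \<in> \<Gamma>; \<gamma> \<notin> C; x \<in> Y; y \<in> Y\<rbrakk> \<Longrightarrow> x \<gamma> = y \<gamma>"
proof -
  let ?Z = "subtopology (unit_cube_top \<Gamma>) Y"
  have tZ: "topspace ?Z = Y"
    using Y by (auto simp: Sigma01_def)
  obtain D where D: "countable D" "D \<subseteq> Y" "?Z closure_of D = Y"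
    using sep tZ unfolding separable_space_def by auto
  define C where "C = (\<Union>d\<in>D. {\<gamma> \<in> \<Gamma>. d \<gamma> \<notin> {0, 1}})"
  have "countable C"
    unfolding C_def using D(1,2) Y by (intro countable_UN) (auto simp: Sigma01_def)
  moreover have "x \<gamma> = y \<gamma>"
    if \<gamma>: "\<gamma> \<in> \<Gamma>" "\<gamma> \<notin> C" and xy: "x \<in> Y" "y \<in> Y" for \<gamma> x y
  proof -
    have proj: "continuous_map ?Z euclideanreal (\<lambda>x. x \<gamma>)"
      using \<gamma>(1) by (rule continuous_map_cube_coordinate)
    have "(\<lambda>x. x \<gamma>) ` D \<subseteq> {0, 1}"
      using \<gamma> D(2) unfolding C_def by auto
    then have "(\<lambda>x. x \<gamma>) ` topspace ?Z \<subseteq> {0, 1}"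
      using continuous_map_dense_image_in_closed[OF proj] D(3) tZ
      by (simp add: closed_insert)
    then show ?thesis
      using connected_space_two_valued_map_constant[OF con proj] xy tZ by blast
  qed
  ultimately show ?thesis
    using that by blast
qed

text \<open>Every separable connected subspace of Sigma01 is metrizable: it lies in a box
  with countably many nondegenerate sides.\<close>
lemma metrizable_separable_connected_subspace_Sigma01:
  fixes Y :: "('g \<Rightarrow> real) set"
  assumes Y: "Y \<subseteq> Sigma01 \<Gamma>"
    and sep: "separable_space (subtopology (unit_cube_top \<Gamma>) Y)"
    and con: "connected_space (subtopology (unit_cube_top \<Gamma>) Y)"
  shows "metrizable_space (subtopology (unit_cube_top \<Gamma>) Y)"
proof (cases "Y = {}")
  case True
  then show ?thesis
    by (simp add: empty_metrizable_space)
next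
  case False
  then obtain c where c: "c \<in> Y"
    by auto
  obtain C where C: "countable C"
    and agree: "\<And>\<gamma> x y. \<lbrakk>\<gamma> \<in> \<Gamma>; \<gamma> \<notin> C; x \<in> Y; y \<in> Y\<rbrakk> \<Longrightarrow> x \<gamma> = y \<gamma>"
    using separable_connected_Sigma01_agree_off_countable[OF Y sep con] by blast
  define S where "S = (\<lambda>\<gamma>. if \<gamma> \<in> C then {0..1::real} else {c \<gamma>})"
  have "Y \<subseteq> (\<Pi>\<^sub>E \<gamma>\<in>\<Gamma>. S \<gamma>)"
    using Y agree[OF _ _ _ c] by (auto simp: S_def Sigma01_def unit_cube_top_def PiE_def Pi_def)
  moreover have "countable {\<gamma> \<in> \<Gamma>. \<not> (\<exists>a. S \<gamma> \<subseteq> {a})}"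
    by (rule countable_subset[OF _ C]) (auto simp: S_def)
  ultimately show ?thesis
    unfolding unit_cube_top_def
    by (rule metrizable_subspace_of_countably_nontrivial_box) (simp add: metrizable_space_subtopology metrizable_space_euclidean)
qed

theorem mainTheorem5:
  fixes X :: "'a topology" and \<Gamma> :: "'g set"
  assumes "almost_totally_disconnected_via \<Gamma> X"
    and "separable_space X"
    and "connected_space X"
  shows "metrizable_space X"
proof -
  obtain Y where Y: "Y \<subseteq> Sigma01 \<Gamma>"
    and hom: "X homeomorphic_space subtopology (unit_cube_top \<Gamma>) Y"
    using assms(1) unfolding almost_totally_disconnected_via_def by blast
  have "separable_space (subtopology (unit_cube_top \<Gamma>) Y)"
    using assms(2) hom homeomorphic_separable_space by blast
  moreover have "connected_space (subtopology (unit_cube_top \<Gamma>) Y)"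
    using assms(3) hom homeomorphic_connected_space by blast
  ultimately have "metrizable_space (subtopology (unit_cube_top \<Gamma>) Y)"
    using metrizable_separable_connected_subspace_Sigma01[OF Y] by blast
  then show ?thesis
    using hom homeomorphic_metrizable_space homeomorphic_space_sym by blast
qed

end
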